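(* Let $H=(V,E)$ be an undirected graph, $s,t\in V$, and $\ell$ a positive integer. Then $\lambda_{H\setminus C}(s,t)\ge 2(\ell-|C|)$ holds for every $C\subseteq V\setminus\{s,t\}$ with $|C|<\ell$ if and only if $H$ contains $2\ell$ pairwise edge-disjoint $st$-paths such that every node $v\in V\setminus\{s,t\}$ belongs to at most $2$ of them.
   Context: $\lambda_{F}(s,t)$ denotes the maximum number of pairwise edge-disjoint $st$-paths in a graph $F$; $H\setminus C$ is the graph obtained from $H$ by deleting the nodes of $C$ (and their incident edges). *)

theory Defs
  imports Main "HOL-Library.Extended_Nat"
begin

text \<open>Finite undirected multigraph: vertex set V, edge (identifier) set E, and
  an endpoint map ends assigning to each edge its set of one or two endpoints.\<close>

definition graph :: "'v set \<Rightarrow> 'e set \<Rightarrow> ('e \<Rightarrow> 'v set) \<Rightarrow> bool" where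
  "graph V E ends \<longleftrightarrow> finite V \<and> finite E \<and>
     (\<forall>e\<in>E. ends e \<noteq> {} \<and> card (ends e) \<le> 2 \<and> ends e \<subseteq> V)"

definition is_path :: "'v set \<Rightarrow> 'e set \<Rightarrow> ('e \<Rightarrow> 'v set) \<Rightarrow> 'v \<Rightarrow> 'v
                       \<Rightarrow> 'v list \<times> 'e list \<Rightarrow> bool" where
  "is_path V E ends s t p \<longleftrightarrow>
     (let vs = fst p; es = snd p in
       length vs = Suc (length es) \<and> distinct vs \<and> set vs \<subseteq> V \<and>
       hd vs = s \<and> last vs = t \<and>
       (\<forall>i < length es. es ! i \<in> E \<and> ends (es ! i) = {vs ! i, vs ! Suc i}))"

definition edge_disjoint_paths :: "'v set \<Rightarrow> 'e set \<Rightarrow> ('e \<Rightarrow> 'v set) \<Rightarrow> 'v \<Rightarrow> 'v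
        \<Rightarrow> nat \<Rightarrow> (nat \<Rightarrow> 'v list \<times> 'e list) \<Rightarrow> bool" where
  "edge_disjoint_paths V E ends s t k P \<longleftrightarrow>
     (\<forall>i<k. is_path V E ends s t (P i)) \<and>
     (\<forall>i<k. \<forall>j<k. i \<noteq> j \<longrightarrow> set (snd (P i)) \<inter> set (snd (P j)) = {})"

text \<open>lambda_F(s,t): maximum number of pairwise edge-disjoint st-paths
  (as an extended natural, which is infinite only in the degenerate case s = t).\<close>

definition lambda :: "'v set \<Rightarrow> 'e set \<Rightarrow> ('e \<Rightarrow> 'v set) \<Rightarrow> 'v \<Rightarrow> 'v \<Rightarrow> enat" where
  "lambda V E ends s t = Sup {enat k | k. \<exists>P. edge_disjoint_paths V E ends s t k P}"

definition del_verts_V :: "'v set \<Rightarrow> 'v set \<Rightarrow> 'v set" where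
  "del_verts_V V C = V - C"

definition del_verts_E :: "'e set \<Rightarrow> ('e \<Rightarrow> 'v set) \<Rightarrow> 'v set \<Rightarrow> 'e set" where
  "del_verts_E E ends C = {e \<in> E. ends e \<inter> C = {}}"

end

theory Submission
  imports Defs
begin

(* The easy direction: deleting a node set C destroys at most 2|C| of such paths, so at
   least 2(l - |C|) edge-disjoint st-paths survive in H minus C.

   The hard direction is reduced to max-flow/min-cut for unit capacities.  We build an
   auxiliary digraph: every inner node v is split into an entry copy (v,False) and an exit
   copy (v,True), joined by two parallel arcs; s and t are represented by their exit copy
   only; every non-loop edge e with ends {u,w} gives the arcs u_exit -> w_entry and
   w_exit -> u_entry.  An arc cut separating s from t splits into edges F and split nodes C;
   F meets every st-path of H minus C, so the hypothesis yields |cut| >= |F| + 2|C| >= 2l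
   (trivially so if |C| >= l).  Hence there is a flow of value at least 2l; taking one with
   minimum support, it never uses both orientations of an edge, and decomposing it into
   arc-disjoint walks and projecting them to H gives the required paths (an inner node is
   passed only via one of its two split arcs). *)

section \<open>Walks in digraphs\<close>

text \<open>A digraph is given by tail and head maps on arcs; walk tail head x as y says that
  the arc sequence as leads from node x to node y.  Its node sequence is x # map head as.\<close>

fun walk :: "('a \<Rightarrow> 'n) \<Rightarrow> ('a \<Rightarrow> 'n) \<Rightarrow> 'n \<Rightarrow> 'a list \<Rightarrow> 'n \<Rightarrow> bool" where
  "walk tail head x [] y \<longleftrightarrow> x = y"
| "walk tail head x (a # as) y \<longleftrightarrow> tail a = x \<and> walk tail head (head a) as y"

lemma walk_append:
  "walk tail head x as y \<Longrightarrow> walk tail head y bs z \<Longrightarrow> walk tail head x (as @ bs) z"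
  by (induction as arbitrary: x) auto

lemma walk_snoc:
  "walk tail head x as y \<Longrightarrow> tail a = y \<Longrightarrow> walk tail head x (as @ [a]) (head a)"
  using walk_append[of tail head x as y "[a]" "head a"] by simp

lemma walk_last: "walk tail head x (as @ [a]) y \<Longrightarrow> head a = y"
  by (induction as arbitrary: x) auto

lemma walk_split:
  assumes "walk tail head x as y" and "i \<le> length as"
  shows "walk tail head x (take i as) ((x # map head as) ! i)"
    and "walk tail head ((x # map head as) ! i) (drop i as) y"
  using assms
proof (induction as arbitrary: x i)
  case (Cons a as)
  { case 1 then show ?case using Cons.IH(1)[of "head a" "i - 1"] by (cases i) auto }
  { case 2 then show ?case using Cons.IH(2)[of "head a" "i - 1"] by (cases i) auto }
qed simp_all

lemma walk_shortcut:
  assumes w: "walk tail head x as y" and nd: "\<not> distinct (x # map head as)"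
  shows "\<exists>bs. walk tail head x bs y \<and> set bs \<subseteq> set as \<and> length bs < length as"
proof -
  let ?ns = "x # map head as"
  obtain i j where ij: "i < j" "j < length ?ns" "?ns ! i = ?ns ! j"
  proof -
    obtain i j where "i < length ?ns" "j < length ?ns" "i \<noteq> j" "?ns ! i = ?ns ! j"
      using nd unfolding distinct_conv_nth by blast
    then show ?thesis using that[of i j] that[of j i] by (cases "i < j") auto
  qed
  have j: "j \<le> length as" and i: "i \<le> length as" using ij by auto
  have "walk tail head (?ns ! i) (drop j as) y"
    using walk_split(2)[OF w j] unfolding ij(3) .
  then have "walk tail head x (take i as @ drop j as) y"
    by (rule walk_append[OF walk_split(1)[OF w i]])
  moreover have "set (take i as @ drop j as) \<subseteq> set as"
    using set_take_subset[of i as] set_drop_subset[of j as] by auto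
  moreover have "length (take i as @ drop j as) < length as" using ij j by simp
  ultimately show ?thesis by blast
qed

lemma walk_to_simple:
  "walk tail head x as y \<Longrightarrow>
   \<exists>bs. walk tail head x bs y \<and> set bs \<subseteq> set as \<and> distinct (x # map head bs)"
proof (induction "length as" arbitrary: as rule: less_induct)
  case less
  show ?case
  proof (cases "distinct (x # map head as)")
    case False
    then obtain bs where "walk tail head x bs y" "set bs \<subseteq> set as" "length bs < length as"
      using walk_shortcut[OF less.prems] by blast
    then show ?thesis using less.hyps[of bs] by (meson order_trans)
  qed (use less.prems in blast)
qed

lemma walk_leaves:
  "walk tail head x as y \<Longrightarrow> z \<in> head ` set as \<Longrightarrow> z \<noteq> y \<Longrightarrow> \<exists>a\<in>set as. tail a = z"
proof (induction as arbitrary: x)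
  case (Cons a as)
  show ?case
  proof (cases "z = head a")
    case True
    then have "as \<noteq> []" using Cons.prems by auto
    then obtain b bs where "as = b # bs" by (cases as) auto
    then show ?thesis using Cons.prems True by auto
  next
    case False
    then show ?thesis using Cons by auto
  qed
qed simp

text \<open>Members of a pairwise disjoint family that all meet a finite set X are at most |X|
  many: choosing a common element is injective.\<close>

lemma disjoint_family_meeting_le:
  assumes "finite X"
    and disj: "\<And>i j. i \<in> I \<Longrightarrow> j \<in> I \<Longrightarrow> i \<noteq> j \<Longrightarrow> A i \<inter> A j = {}"
    and meet: "\<And>i. i \<in> I \<Longrightarrow> A i \<inter> X \<noteq> {}"
  shows "card I \<le> card X"
proof -
  define h where "h i = (SOME x. x \<in> A i \<inter> X)" for i
  have h: "h i \<in> A i \<inter> X" if "i \<in> I" for i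
  proof -
    have "\<exists>x. x \<in> A i \<inter> X" using meet[OF that] by blast
    then show ?thesis unfolding h_def by (rule someI_ex)
  qed
  have "inj_on h I"
  proof (rule inj_onI)
    fix i j assume "i \<in> I" "j \<in> I" "h i = h j"
    then show "i = j" using h[of i] h[of j] disj[of i j] by auto
  qed
  moreover have "h ` I \<subseteq> X" using h by blast
  ultimately show ?thesis using \<open>finite X\<close> by (rule card_inj_on_le)
qed

section \<open>Integral flows in networks with unit capacities\<close>

text \<open>Residual arcs: (a, True) traverses arc a forwards, (a, False) backwards.\<close>

fun res_tail :: "('a \<Rightarrow> 'n) \<Rightarrow> ('a \<Rightarrow> 'n) \<Rightarrow> 'a \<times> bool \<Rightarrow> 'n" where
  "res_tail tail head (a, fwd) = (if fwd then tail a else head a)"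

fun res_head :: "('a \<Rightarrow> 'n) \<Rightarrow> ('a \<Rightarrow> 'n) \<Rightarrow> 'a \<times> bool \<Rightarrow> 'n" where
  "res_head tail head (a, fwd) = (if fwd then head a else tail a)"

text \<open>The signed flow of a list of residual arcs: +1 on arcs used forwards, -1 on arcs
  used backwards.  Pushing one unit along a residual walk adds this function to a flow.\<close>

fun signed_flow :: "('a \<times> bool) list \<Rightarrow> 'a \<Rightarrow> int" where
  "signed_flow [] a = 0"
| "signed_flow (p # ps) a =
     (if fst p = a then (if snd p then 1 else -1) else 0) + signed_flow ps a"

lemma signed_flow_distinct:
  "distinct ps \<Longrightarrow>
   signed_flow ps a = of_bool ((a, True) \<in> set ps) - of_bool ((a, False) \<in> set ps)"
proof (induction ps)
  case (Cons p ps)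
  then show ?case by (cases p; cases "snd p") auto
qed simp

lemma signed_flow_forward:
  "distinct as \<Longrightarrow> signed_flow (map (\<lambda>a. (a, True)) as) a = of_bool (a \<in> set as)"
  by (subst signed_flow_distinct) (auto simp: distinct_map inj_on_def)

lemma walk_forward:
  "walk tail head x as y \<Longrightarrow>
   walk (res_tail tail head) (res_head tail head) x (map (\<lambda>a. (a, True)) as) y"
  by (induction as arbitrary: x) auto

text \<open>A finite network with arc set Arcs, source s and sink t; all capacities are 1.\<close>

locale unit_network =
  fixes Arcs :: "'a set" and tail head :: "'a \<Rightarrow> 'n" and s t :: 'n
  assumes finite_Arcs: "finite Arcs" and s_neq_t: "s \<noteq> t"
begin

abbreviation res_walk :: "'n \<Rightarrow> ('a \<times> bool) list \<Rightarrow> 'n \<Rightarrow> bool" where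
  "res_walk \<equiv> walk (res_tail tail head) (res_head tail head)"

definition excess :: "('a \<Rightarrow> int) \<Rightarrow> 'n \<Rightarrow> int" where
  "excess f n = (\<Sum>a\<in>Arcs. f a * (of_bool (head a = n) - of_bool (tail a = n)))"

definition is_flow :: "('a \<Rightarrow> int) \<Rightarrow> bool" where
  "is_flow f \<longleftrightarrow> (\<forall>a. f a = 0 \<or> f a = 1) \<and> (\<forall>a. a \<notin> Arcs \<longrightarrow> f a = 0) \<and>
     (\<forall>n. n \<noteq> s \<and> n \<noteq> t \<longrightarrow> excess f n = 0)"

definition flow_value :: "('a \<Rightarrow> int) \<Rightarrow> int" where
  "flow_value f = - excess f s"

definition cut_arcs :: "'n set \<Rightarrow> 'a set" where
  "cut_arcs S = {a \<in> Arcs. tail a \<in> S \<and> head a \<notin> S}"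

definition residual :: "('a \<Rightarrow> int) \<Rightarrow> ('a \<times> bool) set" where
  "residual f = {(a, True) | a. a \<in> Arcs \<and> f a = 0} \<union> {(a, False) | a. a \<in> Arcs \<and> f a = 1}"

lemma residual_iff: "(a, fwd) \<in> residual f \<longleftrightarrow> a \<in> Arcs \<and> f a = (if fwd then 0 else 1)"
  unfolding residual_def by (cases fwd) auto

lemma flow_values: "is_flow f \<Longrightarrow> f a = 0 \<or> f a = 1"
  unfolding is_flow_def by blast

lemma flow_support: "is_flow f \<Longrightarrow> f a \<noteq> 0 \<Longrightarrow> a \<in> Arcs"
  unfolding is_flow_def by blast

lemma excess_add: "excess (\<lambda>a. f a + g a) n = excess f n + excess g n"
  unfolding excess_def by (simp add: sum.distrib distrib_right)

lemma excess_diff: "excess (\<lambda>a. f a - g a) n = excess f n - excess g n"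
  unfolding excess_def by (simp add: sum_subtractf left_diff_distrib)

lemma excess_single:
  assumes "fst p \<in> Arcs"
  shows "excess (\<lambda>a. if fst p = a then (if snd p then 1 else -1) else 0) n
     = of_bool (res_head tail head p = n) - of_bool (res_tail tail head p = n)"
proof -
  obtain b fwd where p: "p = (b, fwd)" by (cases p)
  have "excess (\<lambda>a. if fst p = a then (if snd p then 1 else -1) else 0) n
     = (\<Sum>a\<in>Arcs. if a = b then (if fwd then 1 else -1) *
          (of_bool (head b = n) - of_bool (tail b = n)) else 0)"
    unfolding excess_def p by (intro sum.cong) auto
  also have "\<dots> = (if fwd then 1 else -1) * (of_bool (head b = n) - of_bool (tail b = n))"
    using assms p finite_Arcs by (simp add: sum.delta)
  finally show ?thesis using p by (cases fwd) auto
qed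

lemma excess_signed_flow:
  "res_walk x ps y \<Longrightarrow> fst ` set ps \<subseteq> Arcs \<Longrightarrow>
   excess (signed_flow ps) n = of_bool (n = y) - of_bool (n = x)"
proof (induction ps arbitrary: x)
  case (Cons p ps)
  have "signed_flow (p # ps) =
      (\<lambda>a. (if fst p = a then (if snd p then 1 else -1) else 0) + signed_flow ps a)"
    by auto
  then have "excess (signed_flow (p # ps)) n =
      (of_bool (res_head tail head p = n) - of_bool (res_tail tail head p = n)) +
      excess (signed_flow ps) n"
    using excess_add excess_single Cons.prems by auto
  also have "\<dots> = of_bool (n = y) - of_bool (n = x)"
    using Cons by auto
  finally show ?case .
qed (simp add: excess_def)

lemma sum_excess:
  assumes "finite S"
  shows "(\<Sum>n\<in>S. excess f n) = (\<Sum>a\<in>Arcs. f a * (of_bool (head a \<in> S) - of_bool (tail a \<in> S)))"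
proof -
  have indicator: "(\<Sum>n\<in>S. (of_bool (x = n) :: int)) = of_bool (x \<in> S)" for x
    using assms by (simp add: of_bool_def sum.delta)
  have "(\<Sum>n\<in>S. excess f n) = (\<Sum>a\<in>Arcs. \<Sum>n\<in>S. f a * (of_bool (head a = n) - of_bool (tail a = n)))"
    unfolding excess_def by (rule sum.swap)
  also have "\<dots> = (\<Sum>a\<in>Arcs. f a * (of_bool (head a \<in> S) - of_bool (tail a \<in> S)))"
    by (simp add: sum_distrib_left[symmetric] sum_subtractf indicator)
  finally show ?thesis .
qed

lemma sum_excess_source_side:
  assumes f: "is_flow f" and "finite S" "s \<in> S" "t \<notin> S"
  shows "(\<Sum>n\<in>S. excess f n) = - flow_value f"
proof -
  have "(\<Sum>n\<in>S. excess f n) = excess f s + (\<Sum>n\<in>S - {s}. excess f n)"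
    using assms by (simp add: sum.remove)
  also have "(\<Sum>n\<in>S - {s}. excess f n) = 0"
    using f \<open>t \<notin> S\<close> unfolding is_flow_def by (intro sum.neutral) auto
  finally show ?thesis unfolding flow_value_def by simp
qed

lemma augment:
  assumes f: "is_flow f" and w: "res_walk s ps t"
    and r: "set ps \<subseteq> residual f" and d: "distinct ps"
  shows "is_flow (\<lambda>a. f a + signed_flow ps a)"
    and "flow_value (\<lambda>a. f a + signed_flow ps a) = flow_value f + 1"
proof -
  have A: "fst ` set ps \<subseteq> Arcs" using r residual_iff by force
  have exn: "excess (\<lambda>a. f a + signed_flow ps a) n = excess f n + of_bool (n = t) - of_bool (n = s)"
    for n using excess_add excess_signed_flow[OF w A] by simp
  have vals: "f a + signed_flow ps a = 0 \<or> f a + signed_flow ps a = 1" for a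
  proof -
    have "f a = 0" if "(a, True) \<in> set ps" using subsetD[OF r that] by (simp add: residual_iff)
    moreover have "f a = 1" if "(a, False) \<in> set ps"
      using subsetD[OF r that] by (simp add: residual_iff)
    ultimately show ?thesis
      using signed_flow_distinct[OF d, of a] flow_values[OF f, of a] by auto
  qed
  have outside: "f a + signed_flow ps a = 0" if "a \<notin> Arcs" for a
  proof -
    have "(a, True) \<notin> set ps" "(a, False) \<notin> set ps"
      using A that unfolding image_subset_iff by fastforce+
    then show ?thesis using signed_flow_distinct[OF d, of a] f that unfolding is_flow_def by simp
  qed
  show "is_flow (\<lambda>a. f a + signed_flow ps a)"
    using vals outside exn f unfolding is_flow_def by auto
  show "flow_value (\<lambda>a. f a + signed_flow ps a) = flow_value f + 1"
    unfolding flow_value_def using exn s_neq_t by simp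
qed

text \<open>Flows are 0/1 functions supported on the finite arc set, so a maximum flow exists.\<close>

lemma finite_flows: "finite {f. is_flow f}"
proof -
  have "{f. is_flow f} \<subseteq> (\<lambda>B a. if a \<in> B then 1 else 0) ` Pow Arcs"
  proof
    fix f assume "f \<in> {f. is_flow f}"
    then have "f = (\<lambda>a. if a \<in> {a \<in> Arcs. f a = 1} then 1 else 0)"
      using flow_values flow_support by fastforce
    then show "f \<in> (\<lambda>B a. if a \<in> B then 1 else 0) ` Pow Arcs" by blast
  qed
  moreover have "finite ((\<lambda>B a. if a \<in> B then 1 else 0) ` Pow Arcs)"
    using finite_Arcs by simp
  ultimately show ?thesis by (rule finite_subset)
qed

lemma max_flow_exists: "\<exists>f. is_flow f \<and> (\<forall>g. is_flow g \<longrightarrow> flow_value g \<le> flow_value f)"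
proof -
  have "is_flow (\<lambda>_. 0)" unfolding is_flow_def excess_def by simp
  then have "finite (flow_value ` {f. is_flow f})" "flow_value ` {f. is_flow f} \<noteq> {}"
    using finite_flows by auto
  then show ?thesis using Max_in Max_ge by fastforce
qed

text \<open>If no residual st-walk exists, the nodes residually reachable from s form a cut
  whose size equals the flow value: arcs leaving it are saturated, arcs entering it empty.\<close>

lemma min_cut_of_max_flow:
  assumes f: "is_flow f" and no_walk: "\<nexists>ps. res_walk s ps t \<and> set ps \<subseteq> residual f"
  shows "\<exists>S. s \<in> S \<and> t \<notin> S \<and> flow_value f = int (card (cut_arcs S))"
proof -
  define S where "S = {n. \<exists>ps. res_walk s ps n \<and> set ps \<subseteq> residual f}"
  have sS: "s \<in> S" unfolding S_def by (rule CollectI, rule exI[of _ "[]"]) simp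
  have tS: "t \<notin> S" using no_walk unfolding S_def by blast
  have extend: "res_head tail head p \<in> S"
    if "n \<in> S" "p \<in> residual f" "res_tail tail head p = n" for n p
  proof -
    obtain ps where "res_walk s ps n" "set ps \<subseteq> residual f" using \<open>n \<in> S\<close> unfolding S_def by blast
    then have "res_walk s (ps @ [p]) (res_head tail head p)" "set (ps @ [p]) \<subseteq> residual f"
      using walk_snoc[of _ _ s ps n p] that by auto
    then show ?thesis unfolding S_def by blast
  qed
  have "S \<subseteq> {s} \<union> tail ` Arcs \<union> head ` Arcs"
  proof
    fix n assume "n \<in> S"
    then obtain ps where w: "res_walk s ps n" "set ps \<subseteq> residual f" unfolding S_def by blast
    show "n \<in> {s} \<union> tail ` Arcs \<union> head ` Arcs"
    proof (cases ps rule: rev_cases)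
      case (snoc qs p)
      have "p \<in> residual f" "res_head tail head p = n" using w snoc walk_last by auto
      then show ?thesis by (cases p; cases "snd p") (auto simp: residual_iff)
    qed (use w in simp)
  qed
  then have finS: "finite S" using finite_Arcs finite_subset by blast
  have crossing: "f a * (of_bool (head a \<in> S) - of_bool (tail a \<in> S)) = - of_bool (a \<in> cut_arcs S)"
    if a: "a \<in> Arcs" for a
  proof -
    have "f a = 1" if "tail a \<in> S" "head a \<notin> S"
      using extend[of "tail a" "(a, True)"] that a flow_values[OF f, of a] by (auto simp: residual_iff)
    moreover have "f a = 0" if "head a \<in> S" "tail a \<notin> S"
      using extend[of "head a" "(a, False)"] that a flow_values[OF f, of a] by (auto simp: residual_iff)
    ultimately show ?thesis using a unfolding cut_arcs_def by auto
  qed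
  have "- flow_value f = (\<Sum>a\<in>Arcs. - of_bool (a \<in> cut_arcs S))"
    using sum_excess_source_side[OF f finS sS tS] sum_excess[OF finS] crossing by simp
  also have "\<dots> = - int (card (cut_arcs S))"
  proof -
    have "cut_arcs S \<subseteq> Arcs" unfolding cut_arcs_def by blast
    then have "(\<Sum>a\<in>Arcs. (of_bool (a \<in> cut_arcs S) :: int)) = int (card (cut_arcs S))"
      using finite_Arcs by (simp add: Int_absorb1)
    then show ?thesis by (simp add: sum_negf)
  qed
  finally show ?thesis using sS tS by auto
qed

theorem max_flow_min_cut:
  assumes "\<And>S. s \<in> S \<Longrightarrow> t \<notin> S \<Longrightarrow> k \<le> card (cut_arcs S)"
  shows "\<exists>f. is_flow f \<and> int k \<le> flow_value f"
proof -
  obtain f where f: "is_flow f" and fmax: "\<And>g. is_flow g \<Longrightarrow> flow_value g \<le> flow_value f"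
    using max_flow_exists by blast
  have "\<nexists>ps. res_walk s ps t \<and> set ps \<subseteq> residual f"
  proof
    assume "\<exists>ps. res_walk s ps t \<and> set ps \<subseteq> residual f"
    then obtain ps where ps: "res_walk s ps t" "set ps \<subseteq> residual f" by blast
    obtain qs where qs: "res_walk s qs t" "set qs \<subseteq> set ps"
      "distinct (s # map (res_head tail head) qs)"
      using walk_to_simple[OF ps(1)] by blast
    have "distinct qs" using qs(3) by (simp add: distinct_map)
    then show False
      using augment[OF f qs(1)] fmax qs(2) ps(2) by (metis order_trans less_add_one not_le)
  qed
  then obtain S where "s \<in> S" "t \<notin> S" "flow_value f = int (card (cut_arcs S))"
    using min_cut_of_max_flow[OF f] by blast
  then show ?thesis using f assms by (intro exI[of _ f]) simp
qed

text \<open>A flow of positive value has an st-walk inside its support: otherwise the nodes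
  reachable from s along used arcs would form a set containing s, but not t, that no used
  arc leaves, so its total excess would be nonnegative.\<close>

lemma support_walk:
  assumes f: "is_flow f" and pos: "flow_value f > 0"
  shows "\<exists>as. walk tail head s as t \<and> set as \<subseteq> {a. f a = 1}"
proof (rule ccontr)
  assume no_walk: "\<not> ?thesis"
  define R where "R = {n. \<exists>as. walk tail head s as n \<and> set as \<subseteq> {a. f a = 1}}"
  have sR: "s \<in> R" unfolding R_def by (rule CollectI, rule exI[of _ "[]"]) simp
  have tR: "t \<notin> R" using no_walk unfolding R_def by blast
  have extend: "head a \<in> R" if a_R: "tail a \<in> R" and used: "f a = 1" for a
  proof -
    obtain as where "walk tail head s as (tail a)" "set as \<subseteq> {a. f a = 1}"
      using a_R unfolding R_def by blast
    then have "walk tail head s (as @ [a]) (head a)" "set (as @ [a]) \<subseteq> {a. f a = 1}"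
      using walk_snoc[of tail head s as "tail a" a] used by auto
    then show ?thesis unfolding R_def by blast
  qed
  have "R \<subseteq> {s} \<union> head ` Arcs"
  proof
    fix n assume "n \<in> R"
    then obtain as where w: "walk tail head s as n" "set as \<subseteq> {a. f a = 1}"
      unfolding R_def by blast
    show "n \<in> {s} \<union> head ` Arcs"
    proof (cases as rule: rev_cases)
      case (snoc qs a)
      then have "f a = 1" "head a = n" using w walk_last by auto
      then show ?thesis using flow_support[OF f, of a] by auto
    qed (use w in simp)
  qed
  then have finR: "finite R" using finite_Arcs finite_subset by blast
  have "0 \<le> (\<Sum>n\<in>R. excess f n)"
    unfolding sum_excess[OF finR]
  proof (rule sum_nonneg)
    fix a assume "a \<in> Arcs"
    show "0 \<le> f a * (of_bool (head a \<in> R) - of_bool (tail a \<in> R))"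
      using extend[of a] flow_values[OF f, of a] by (cases "tail a \<in> R") auto
  qed
  then show False using sum_excess_source_side[OF f finR sR tR] pos by simp
qed

lemma cancel_walk:
  assumes f: "is_flow f" and w: "walk tail head x L y" and d: "distinct L"
    and used: "set L \<subseteq> {a. f a = 1}" and ends: "x = y \<or> (x = s \<and> y = t)"
  defines "g \<equiv> \<lambda>a. if a \<in> set L then 0 else f a"
  shows "is_flow g" and "flow_value g = flow_value f - of_bool (x \<noteq> y)"
proof -
  define ps where "ps = map (\<lambda>a. (a, True)) L"
  have "g = (\<lambda>a. f a - signed_flow ps a)"
    unfolding g_def ps_def signed_flow_forward[OF d] by (rule ext) (use used in auto)
  moreover have "fst ` set ps \<subseteq> Arcs" unfolding ps_def using used flow_support[OF f] by force
  ultimately have ex: "excess g n = excess f n - (of_bool (n = y) - of_bool (n = x))" for n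
    using excess_diff excess_signed_flow[OF walk_forward[OF w]] unfolding ps_def by simp
  have "g a = 0 \<or> g a = 1" "a \<notin> Arcs \<longrightarrow> g a = 0" for a
    using flow_values[OF f] flow_support[OF f] unfolding g_def by auto
  then show "is_flow g" using f ends ex unfolding is_flow_def by auto
  show "flow_value g = flow_value f - of_bool (x \<noteq> y)"
    unfolding flow_value_def using ex[of s] ends s_neq_t by auto
qed

lemma decompose:
  "is_flow f \<Longrightarrow> flow_value f = int m \<Longrightarrow>
   \<exists>W. (\<forall>i<m. walk tail head s (W i) t \<and> distinct (s # map head (W i)) \<and>
              set (W i) \<subseteq> {a. f a = 1}) \<and>
       (\<forall>i<m. \<forall>j<m. i \<noteq> j \<longrightarrow> set (W i) \<inter> set (W j) = {})"
proof (induction m arbitrary: f)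
  case 0
  then show ?case by (intro exI[of _ "\<lambda>_. []"]) simp
next
  case (Suc m)
  obtain as where as: "walk tail head s as t" "set as \<subseteq> {a. f a = 1}"
    using support_walk[OF Suc.prems(1)] Suc.prems(2) by auto
  obtain bs where bs: "walk tail head s bs t" "set bs \<subseteq> {a. f a = 1}" "distinct (s # map head bs)"
    using walk_to_simple[OF as(1)] as(2) by blast
  define g where "g = (\<lambda>a. if a \<in> set bs then 0 else f a)"
  have "distinct bs" using bs(3) by (simp add: distinct_map)
  then have "is_flow g" "flow_value g = int m"
    using cancel_walk[OF Suc.prems(1) bs(1) _ bs(2)] Suc.prems(2) s_neq_t unfolding g_def by auto
  then obtain W where
    W: "\<forall>i<m. walk tail head s (W i) t \<and> distinct (s # map head (W i)) \<and> set (W i) \<subseteq> {a. g a = 1}"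
       "\<forall>i<m. \<forall>j<m. i \<noteq> j \<longrightarrow> set (W i) \<inter> set (W j) = {}"
    using Suc.IH by blast
  have smaller: "{a. g a = 1} \<subseteq> {a. f a = 1} - set bs" unfolding g_def by auto
  then have disj_bs: "set (W i) \<inter> set bs = {}" if "i < m" for i
    using W(1) that by blast
  define W' where "W' = W(m := bs)"
  have "walk tail head s (W' i) t \<and> distinct (s # map head (W' i)) \<and> set (W' i) \<subseteq> {a. f a = 1}"
    if "i < Suc m" for i
  proof (cases "i = m")
    case False
    then have "i < m" using that by simp
    then show ?thesis using W(1)[rule_format, OF \<open>i < m\<close>] smaller False unfolding W'_def by auto
  qed (use bs in \<open>simp add: W'_def\<close>)
  moreover have "set (W' i) \<inter> set (W' j) = {}" if "i < Suc m" "j < Suc m" "i \<noteq> j" for i j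
    using W(2) disj_bs[of i] disj_bs[of j] that unfolding W'_def
    by (cases "i = m"; cases "j = m") auto
  ultimately show ?case by blast
qed

end

section \<open>Paths and edge connectivity in H\<close>

lemma is_path_Cons:
  assumes p: "is_path V E ends w b (vs, es)"
    and e: "e \<in> E" "ends e = {a, w}" and a: "a \<in> V" "a \<notin> set vs"
  shows "is_path V E ends a b (a # vs, e # es)"
proof -
  have "vs \<noteq> []" "hd vs = w" "length vs = Suc (length es)"
    using p unfolding is_path_def Let_def by auto
  then have "vs ! 0 = w" "last (a # vs) = last vs" by (simp_all add: hd_conv_nth)
  then show ?thesis
    using p e a unfolding is_path_def Let_def by (simp add: All_less_Suc2)
qed

lemma path_avoiding_deleted:
  assumes p: "is_path V E ends s t p" and C: "set (fst p) \<inter> C = {}"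
  shows "is_path (del_verts_V V C) (del_verts_E E ends C) ends s t p"
proof -
  obtain vs es where pe: "p = (vs, es)" by (cases p)
  have len: "length vs = Suc (length es)"
    and ed: "\<And>i. i < length es \<Longrightarrow> ends (es ! i) = {vs ! i, vs ! Suc i}"
    using p unfolding is_path_def pe Let_def by auto
  have "ends (es ! i) \<inter> C = {}" if "i < length es" for i
  proof -
    have "vs ! i \<in> set vs" "vs ! Suc i \<in> set vs" using len that by simp_all
    then show ?thesis using ed[OF that] C pe by auto
  qed
  then show ?thesis
    using p C unfolding is_path_def pe Let_def del_verts_V_def del_verts_E_def by auto
qed

lemma lambda_le_hitting_set:
  assumes "finite F" and hit: "\<And>p. is_path V E ends s t p \<Longrightarrow> set (snd p) \<inter> F \<noteq> {}"
  shows "lambda V E ends s t \<le> enat (card F)"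
  unfolding lambda_def
proof (rule Sup_least)
  fix x assume "x \<in> {enat k |k. \<exists>P. edge_disjoint_paths V E ends s t k P}"
  then obtain k P where x: "x = enat k" and P: "edge_disjoint_paths V E ends s t k P" by blast
  have "card {..<k} \<le> card F"
  proof (rule disjoint_family_meeting_le[OF \<open>finite F\<close>])
    fix i j assume "i \<in> {..<k}" "j \<in> {..<k}" "i \<noteq> j"
    then show "set (snd (P i)) \<inter> set (snd (P j)) = {}"
      using P unfolding edge_disjoint_paths_def by simp
  next
    fix i assume "i \<in> {..<k}"
    then show "set (snd (P i)) \<inter> F \<noteq> {}"
      using P hit unfolding edge_disjoint_paths_def by simp
  qed
  then show "x \<le> enat (card F)" using x by simp
qed

lemma lambda_ge_family:
  assumes "finite I" and paths: "\<And>i. i \<in> I \<Longrightarrow> is_path V E ends s t (P i)"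
    and disj: "\<And>i j. i \<in> I \<Longrightarrow> j \<in> I \<Longrightarrow> i \<noteq> j \<Longrightarrow> set (snd (P i)) \<inter> set (snd (P j)) = {}"
  shows "enat (card I) \<le> lambda V E ends s t"
proof -
  obtain h where h: "bij_betw h {..<card I} I"
    using ex_bij_betw_nat_finite[OF \<open>finite I\<close>] atLeast0LessThan by metis
  then have hI: "h i \<in> I" if "i < card I" for i
    using that unfolding bij_betw_def by auto
  have "edge_disjoint_paths V E ends s t (card I) (P \<circ> h)"
    unfolding edge_disjoint_paths_def
  proof (intro conjI allI impI)
    fix i assume "i < card I"
    then show "is_path V E ends s t ((P \<circ> h) i)" using paths hI by simp
  next
    fix i j assume ij: "i < card I" "j < card I" "i \<noteq> j"
    then have "h i \<noteq> h j" using h unfolding bij_betw_def inj_on_def by auto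
    then show "set (snd ((P \<circ> h) i)) \<inter> set (snd ((P \<circ> h) j)) = {}"
      using disj hI ij by simp
  qed
  then show ?thesis unfolding lambda_def by (intro Sup_upper) blast
qed

lemma paths_meeting_le:
  fixes k :: nat
  assumes "finite C" "C \<subseteq> V - {s, t}"
    and use: "\<forall>v \<in> V - {s, t}. card {i. i < k \<and> v \<in> set (fst (P i))} \<le> 2"
  shows "card {i. i < k \<and> set (fst (P i)) \<inter> C \<noteq> {}} \<le> 2 * card C"
proof -
  have "finite (\<Union>v\<in>C. {i. i < k \<and> v \<in> set (fst (P i))})"
    by (rule finite_subset[of _ "{..<k}"]) auto
  then have "card {i. i < k \<and> set (fst (P i)) \<inter> C \<noteq> {}}
      \<le> card (\<Union>v\<in>C. {i. i < k \<and> v \<in> set (fst (P i))})"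
    by (rule card_mono) auto
  also have "\<dots> \<le> (\<Sum>v\<in>C. card {i. i < k \<and> v \<in> set (fst (P i))})"
    using \<open>finite C\<close> by (rule card_UN_le)
  also have "\<dots> \<le> (\<Sum>v\<in>C. 2)"
    using use assms(2) by (intro sum_mono) blast
  finally show ?thesis by simp
qed

section \<open>The auxiliary digraph\<close>

text \<open>Node (v, True) is the exit copy of v and (v, False) its entry copy.  The terminals
  s and t only have their exit copy, which then also serves as their entry.\<close>

definition entry :: "'v \<Rightarrow> 'v \<Rightarrow> 'v \<Rightarrow> 'v \<times> bool" where
  "entry s t w = (w, w = s \<or> w = t)"

text \<open>Arc Inl (e, u, w) traverses the edge e from u to w; the arcs Inr (v, False) and
  Inr (v, True) are two parallel arcs from the entry to the exit copy of an inner node v.\<close>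

type_synonym ('e, 'v) aux_arc = "('e \<times> 'v \<times> 'v) + ('v \<times> bool)"

fun aux_tail :: "('e, 'v) aux_arc \<Rightarrow> 'v \<times> bool" where
  "aux_tail (Inl (e, u, w)) = (u, True)"
| "aux_tail (Inr (v, b)) = (v, False)"

fun aux_head :: "'v \<Rightarrow> 'v \<Rightarrow> ('e, 'v) aux_arc \<Rightarrow> 'v \<times> bool" where
  "aux_head s t (Inl (e, u, w)) = entry s t w"
| "aux_head s t (Inr (v, b)) = (v, True)"

definition aux_arcs :: "'v set \<Rightarrow> 'e set \<Rightarrow> ('e \<Rightarrow> 'v set) \<Rightarrow> 'v \<Rightarrow> 'v \<Rightarrow> ('e, 'v) aux_arc set"
  where "aux_arcs V E ends s t =
    Inl ` {(e, u, w). e \<in> E \<and> ends e = {u, w} \<and> u \<noteq> w} \<union> Inr ` ((V - {s, t}) \<times> UNIV)"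

lemma aux_arcs_Inl: "Inl (e, u, w) \<in> aux_arcs V E ends s t \<longleftrightarrow> e \<in> E \<and> ends e = {u, w} \<and> u \<noteq> w"
  unfolding aux_arcs_def by auto

lemma aux_arcs_Inr: "Inr (v, b) \<in> aux_arcs V E ends s t \<longleftrightarrow> v \<in> V - {s, t}"
  unfolding aux_arcs_def by auto

lemma finite_aux_arcs:
  assumes "graph V E ends"
  shows "finite (aux_arcs V E ends s t)"
proof -
  have "{(e, u, w). e \<in> E \<and> ends e = {u, w} \<and> u \<noteq> w} \<subseteq> E \<times> V \<times> V"
    using assms unfolding graph_def by auto
  moreover have "finite (E \<times> V \<times> V)" "finite (V - {s, t})"
    using assms unfolding graph_def by simp_all
  ultimately show ?thesis unfolding aux_arcs_def by (simp add: finite_subset)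
qed

fun edge_steps :: "('e, 'v) aux_arc list \<Rightarrow> ('e \<times> 'v \<times> 'v) list" where
  "edge_steps [] = []"
| "edge_steps (Inl x # as) = x # edge_steps as"
| "edge_steps (Inr y # as) = edge_steps as"

lemma edge_steps_set: "x \<in> set (edge_steps as) \<Longrightarrow> Inl x \<in> set as"
  by (induction as rule: edge_steps.induct) auto

lemma edge_steps_heads:
  "map (aux_head s t) (filter isl as) = map (entry s t \<circ> snd \<circ> snd) (edge_steps as)"
  by (induction as rule: edge_steps.induct) auto

fun edge_walk :: "'e set \<Rightarrow> ('e \<Rightarrow> 'v set) \<Rightarrow> 'v \<Rightarrow> ('e \<times> 'v \<times> 'v) list \<Rightarrow> 'v \<Rightarrow> bool" where
  "edge_walk E ends a [] b \<longleftrightarrow> a = b"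
| "edge_walk E ends a ((e, u, w) # el) b \<longleftrightarrow>
     u = a \<and> e \<in> E \<and> ends e = {u, w} \<and> edge_walk E ends w el b"

lemma aux_walk_edge_walk:
  "walk aux_tail (aux_head s t) x as y \<Longrightarrow> set as \<subseteq> aux_arcs V E ends s t \<Longrightarrow>
   x = (a, True) \<or> x = entry s t a \<Longrightarrow> y = (b, True) \<Longrightarrow> edge_walk E ends a (edge_steps as) b"
proof (induction as arbitrary: x a)
  case (Cons c as)
  show ?case
  proof (cases c)
    case (Inl x1)
    obtain e u w where c: "c = Inl (e, u, w)" using Inl by (cases x1) auto
    have "u = a" using Cons.prems(1,3) c by (auto simp: entry_def)
    moreover have "e \<in> E" "ends e = {u, w}" using Cons.prems(2) c by (auto simp: aux_arcs_Inl)
    moreover have "edge_walk E ends w (edge_steps as) b"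
      using Cons.IH[of "entry s t w" w] Cons.prems c by auto
    ultimately show ?thesis using c by simp
  next
    case (Inr x2)
    obtain v d where c: "c = Inr (v, d)" using Inr by (cases x2) auto
    have "v = a" using Cons.prems(1,3) c by (auto simp: entry_def)
    then show ?thesis using Cons.IH[of "(v, True)" a] Cons.prems c by auto
  qed
qed (auto simp: entry_def)

lemma edge_walk_is_path:
  assumes "edge_walk E ends a el b" "graph V E ends" "a \<in> V" "distinct (a # map (snd \<circ> snd) el)"
  shows "is_path V E ends a b (a # map (snd \<circ> snd) el, map fst el)"
  using assms
proof (induction el arbitrary: a)
  case Nil
  then show ?case unfolding is_path_def by simp
next
  case (Cons x el)
  obtain e u w where x: "x = (e, u, w)" by (cases x) auto
  have e: "u = a" "e \<in> E" "ends e = {a, w}" "edge_walk E ends w el b"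
    using Cons.prems(1) x by auto
  then have "w \<in> V" using Cons.prems(2) unfolding graph_def by blast
  then have path: "is_path V E ends w b (w # map (snd \<circ> snd) el, map fst el)"
    using Cons.IH[OF e(4) Cons.prems(2)] Cons.prems(4) x by (simp add: comp_def)
  have "a \<notin> set (w # map (snd \<circ> snd) el)" using Cons.prems(4) x by auto
  from is_path_Cons[OF path e(2,3) Cons.prems(3) this] show ?case using x by (simp add: comp_def)
qed

locale split_network =
  fixes V :: "'v set" and E :: "'e set" and ends :: "'e \<Rightarrow> 'v set" and s t :: 'v
  assumes graph: "graph V E ends" and s_in_V: "s \<in> V" and s_neq_t: "s \<noteq> t"
begin

abbreviation Arcs :: "('e, 'v) aux_arc set" where
  "Arcs \<equiv> aux_arcs V E ends s t"

sublocale N: unit_network Arcs aux_tail "aux_head s t" "(s, True)" "(t, True)"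
  using finite_aux_arcs[OF graph] s_neq_t by unfold_locales auto

text \<open>An arc cut S consists of the split nodes whose entry copy lies in S but whose exit
  copy does not, and of the edges leaving S.\<close>

definition cut_nodes :: "('v \<times> bool) set \<Rightarrow> 'v set" where
  "cut_nodes S = {v \<in> V - {s, t}. (v, False) \<in> S \<and> (v, True) \<notin> S}"

definition cut_edges :: "('v \<times> bool) set \<Rightarrow> 'e set" where
  "cut_edges S = {e \<in> E. \<exists>u w. ends e = {u, w} \<and> u \<noteq> w \<and> (u, True) \<in> S \<and> entry s t w \<notin> S}"

lemma card_cut_arcs: "card (cut_edges S) + 2 * card (cut_nodes S) \<le> card (N.cut_arcs S)"
proof -
  define CL where "CL = N.cut_arcs S \<inter> range Inl"
  define CR where "CR = (Inr ` (cut_nodes S \<times> UNIV) :: ('e, 'v) aux_arc set)"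
  have fin: "finite (N.cut_arcs S)" using N.finite_Arcs unfolding N.cut_arcs_def by simp
  then have finCL: "finite CL" unfolding CL_def by simp
  have "cut_edges S \<subseteq> (\<lambda>x. fst (projl x)) ` CL"
  proof
    fix e assume "e \<in> cut_edges S"
    then obtain u w where "e \<in> E" "ends e = {u, w}" "u \<noteq> w" "(u, True) \<in> S" "entry s t w \<notin> S"
      unfolding cut_edges_def by blast
    then have "Inl (e, u, w) \<in> CL" by (simp add: CL_def N.cut_arcs_def aux_arcs_Inl)
    then show "e \<in> (\<lambda>x. fst (projl x)) ` CL" by (rule rev_image_eqI) simp
  qed
  then have "card (cut_edges S) \<le> card ((\<lambda>x. fst (projl x)) ` CL)"
    by (rule card_mono[OF finite_imageI[OF finCL]])
  also have "\<dots> \<le> card CL" by (rule card_image_le[OF finCL])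
  finally have edges: "card (cut_edges S) \<le> card CL" .
  have "card CR = card (cut_nodes S \<times> (UNIV :: bool set))"
    unfolding CR_def by (rule card_image) (simp add: inj_on_def)
  then have nodes: "card CR = 2 * card (cut_nodes S)" by (simp add: card_cartesian_product)
  have "CR \<subseteq> N.cut_arcs S"
    unfolding CR_def N.cut_arcs_def cut_nodes_def by (auto simp: aux_arcs_Inr)
  moreover have "CL \<subseteq> N.cut_arcs S" "CL \<inter> CR = {}" unfolding CL_def CR_def by auto
  ultimately have "card CL + card CR \<le> card (N.cut_arcs S)"
    using fin card_Un_disjoint[OF finCL, of CR] card_mono[OF fin, of "CL \<union> CR"]
    by (simp add: finite_subset)
  then show ?thesis using edges nodes by linarith
qed

text \<open>The cut edges separate s from t once the cut nodes are deleted: along a path in the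
  remaining graph, every exit copy stays in S.\<close>

lemma cut_separates:
  assumes S: "(s, True) \<in> S" "(t, True) \<notin> S"
    and p: "is_path (del_verts_V V (cut_nodes S)) (del_verts_E E ends (cut_nodes S)) ends s t p"
  shows "set (snd p) \<inter> cut_edges S \<noteq> {}"
proof
  assume no_cut_edge: "set (snd p) \<inter> cut_edges S = {}"
  obtain vs es where pe: "p = (vs, es)" by (cases p)
  have len: "length vs = Suc (length es)" and dv: "distinct vs"
    and sv: "set vs \<subseteq> V - cut_nodes S" and hd: "hd vs = s" and lst: "last vs = t"
    and ed: "\<And>i. i < length es \<Longrightarrow> es ! i \<in> E \<and> ends (es ! i) = {vs ! i, vs ! Suc i}"
    using p unfolding is_path_def pe Let_def del_verts_V_def del_verts_E_def by auto
  have "(vs ! i, True) \<in> S" if "i \<le> length es" for i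
    using that
  proof (induction i)
    case 0
    then show ?case using S hd len by (cases vs) auto
  next
    case (Suc i)
    let ?w = "vs ! Suc i"
    have i: "i < length es" using Suc.prems by simp
    have "vs ! i \<noteq> ?w" using dv len i by (simp add: nth_eq_iff_index_eq)
    moreover have "es ! i \<notin> cut_edges S" using no_cut_edge nth_mem[OF i] pe by auto
    moreover have "(vs ! i, True) \<in> S" using Suc.IH i by simp
    ultimately have w_in: "entry s t ?w \<in> S"
      using ed[OF i] unfolding cut_edges_def by blast
    have "?w \<in> V - cut_nodes S" using sv len i by (simp add: subset_iff)
    then show ?case using w_in unfolding entry_def cut_nodes_def by (cases "?w = s \<or> ?w = t") auto
  qed
  moreover have "vs ! length es = t" using lst len last_conv_nth[of vs] by force
  ultimately show False using S by auto
qed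

lemma cut_condition:
  assumes L: "\<forall>C. C \<subseteq> V - {s, t} \<and> card C < l \<longrightarrow>
             lambda (del_verts_V V C) (del_verts_E E ends C) ends s t \<ge> enat (2 * (l - card C))"
    and S: "(s, True) \<in> S" "(t, True) \<notin> S"
  shows "2 * l \<le> card (N.cut_arcs S)"
proof (cases "card (cut_nodes S) < l")
  case True
  have "cut_nodes S \<subseteq> V - {s, t}" unfolding cut_nodes_def by blast
  then have "enat (2 * (l - card (cut_nodes S))) \<le>
      lambda (del_verts_V V (cut_nodes S)) (del_verts_E E ends (cut_nodes S)) ends s t"
    using L True by blast
  also have "\<dots> \<le> enat (card (cut_edges S))"
  proof (rule lambda_le_hitting_set)
    show "finite (cut_edges S)" using graph unfolding graph_def cut_edges_def by simp
  qed (rule cut_separates[OF S])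
  finally show ?thesis using card_cut_arcs[of S] by simp
qed (use card_cut_arcs[of S] in linarith)

text \<open>A unit of flow entering the entry copy of an inner node v must leave it, and the
  only arcs leaving it are the two split arcs of v.\<close>

lemma flow_passes_split_arc:
  assumes f: "N.is_flow f" and v: "v \<in> V - {s, t}"
    and a: "f a = 1" "aux_head s t a = (v, False)"
  shows "\<exists>b. f (Inr (v, b)) = 1"
proof (rule ccontr)
  assume split_unused: "\<not> ?thesis"
  let ?n = "(v, False)"
  let ?T = "\<lambda>x. f x * (of_bool (aux_head s t x = ?n) - of_bool (aux_tail x = ?n))"
  have tail_n: "\<exists>b. x = Inr (v, b)" if "aux_tail x = ?n" for x :: "('e, 'v) aux_arc"
    using that by (cases x rule: aux_tail.cases) auto
  have nonneg: "0 \<le> ?T x" for x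
    using tail_n[of x] split_unused N.flow_values[OF f, of x] by (cases "aux_tail x = ?n") auto
  have "a \<in> Arcs" using N.flow_support[OF f] a(1) by simp
  moreover have "?T a = 1" using a tail_n[of a] split_unused by auto
  ultimately have "1 \<le> (\<Sum>x\<in>Arcs. ?T x)"
    using member_le_sum[of a Arcs ?T] nonneg N.finite_Arcs by simp
  moreover have "N.excess f ?n = 0" using f v unfolding N.is_flow_def by auto
  ultimately show False unfolding N.excess_def by simp
qed

lemma flow_reaches_exit:
  assumes f: "N.is_flow f" and a: "f (Inl (e, u, w)) = 1"
  shows "\<exists>L. walk aux_tail (aux_head s t) (entry s t w) L (w, True) \<and> length L \<le> 1 \<and>
             set L \<subseteq> {a. f a = 1} \<inter> Inr ` ({w} \<times> UNIV)"
proof (cases "w \<in> {s, t}")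
  case True
  then show ?thesis by (intro exI[of _ "[]"]) (auto simp: entry_def)
next
  case False
  have "Inl (e, u, w) \<in> Arcs" using N.flow_support[OF f] a by simp
  then have "w \<in> V" using graph unfolding graph_def by (auto simp: aux_arcs_Inl)
  then obtain b where "f (Inr (w, b)) = 1"
    using flow_passes_split_arc[OF f _ a] False by (auto simp: entry_def)
  then show ?thesis using False by (intro exI[of _ "[Inr (w, b)]"]) (auto simp: entry_def)
qed

text \<open>A flow whose support is minimal among flows of at least its value never uses both
  orientations of an edge: otherwise the two edge arcs close a cycle of used arcs (through
  split arcs where needed), and removing that cycle would shrink the support.\<close>

lemma min_support_one_orientation:
  assumes f: "N.is_flow f"
    and minimal: "\<And>g. N.is_flow g \<Longrightarrow> N.flow_value f \<le> N.flow_value g \<Longrightarrow>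
                      card {a. f a = 1} \<le> card {a. g a = 1}"
  shows "\<not> (f (Inl (e, u, w)) = 1 \<and> f (Inl (e, w, u)) = 1)"
proof
  assume both: "f (Inl (e, u, w)) = 1 \<and> f (Inl (e, w, u)) = 1"
  have "Inl (e, u, w) \<in> Arcs" using N.flow_support[OF f] both by simp
  then have "u \<noteq> w" by (simp add: aux_arcs_Inl)
  obtain Lw where Lw: "walk aux_tail (aux_head s t) (entry s t w) Lw (w, True)" "length Lw \<le> 1"
    "set Lw \<subseteq> {a. f a = 1} \<inter> Inr ` ({w} \<times> UNIV)"
    using flow_reaches_exit[OF f, of e u w] both by blast
  obtain Lu where Lu: "walk aux_tail (aux_head s t) (entry s t u) Lu (u, True)" "length Lu \<le> 1"
    "set Lu \<subseteq> {a. f a = 1} \<inter> Inr ` ({u} \<times> UNIV)"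
    using flow_reaches_exit[OF f, of e w u] both by blast
  define L where "L = Inl (e, u, w) # Lw @ Inl (e, w, u) # Lu"
  have "walk aux_tail (aux_head s t) (w, True) (Inl (e, w, u) # Lu) (u, True)"
    using Lu(1) by simp
  then have cycle: "walk aux_tail (aux_head s t) (u, True) L (u, True)"
    unfolding L_def using walk_append[OF Lw(1)] by simp
  have "distinct Lw" using Lw(2) by (cases Lw) auto
  moreover have "distinct Lu" using Lu(2) by (cases Lu) auto
  moreover have "set Lw \<inter> set Lu = {}" using Lw(3) Lu(3) \<open>u \<noteq> w\<close> by blast
  moreover have "Inl x \<notin> set Lw" "Inl x \<notin> set Lu" for x using Lw(3) Lu(3) by auto
  ultimately have "distinct L" using \<open>u \<noteq> w\<close> unfolding L_def by auto
  moreover have used: "set L \<subseteq> {a. f a = 1}" using Lw(3) Lu(3) both unfolding L_def by auto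
  ultimately have g: "N.is_flow (\<lambda>a. if a \<in> set L then 0 else f a)"
      "N.flow_value (\<lambda>a. if a \<in> set L then 0 else f a) = N.flow_value f"
    using N.cancel_walk[OF f cycle] by auto
  have "{a. f a = 1} \<subseteq> Arcs" using N.flow_support[OF f] by force
  then have supp: "finite {a. f a = 1}" using N.finite_Arcs by (rule finite_subset)
  have "{a. (if a \<in> set L then 0 else f a) = 1} \<subseteq> {a. f a = 1} - {Inl (e, u, w)}"
    unfolding L_def by auto
  then have "card {a. (if a \<in> set L then 0 else f a) = 1} \<le> card ({a. f a = 1} - {Inl (e, u, w)})"
    using supp by (intro card_mono) auto
  also have "\<dots> < card {a. f a = 1}" using supp both by (intro card_Diff1_less) auto
  finally show False using minimal[OF g(1)] g(2) by simp
qed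

definition traced_path :: "('e, 'v) aux_arc list \<Rightarrow> 'v list \<times> 'e list" where
  "traced_path W = (s # map (snd \<circ> snd) (edge_steps W), map fst (edge_steps W))"

lemma traced_path_is_path:
  assumes w: "walk aux_tail (aux_head s t) (s, True) W (t, True)" and W: "set W \<subseteq> Arcs"
    and d: "distinct ((s, True) # map (aux_head s t) W)"
  shows "is_path V E ends s t (traced_path W)"
proof -
  have steps: "edge_walk E ends s (edge_steps W) t"
    using aux_walk_edge_walk[OF w W] by blast
  have "distinct ((s, True) # map (aux_head s t) (filter isl W))"
    using d by (auto simp: distinct_map_filter)
  then have "distinct (map (entry s t) (s # map (snd \<circ> snd) (edge_steps W)))"
    unfolding edge_steps_heads by (simp add: entry_def comp_def)
  then have "distinct (s # map (snd \<circ> snd) (edge_steps W))"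
    by (simp only: distinct_map)
  then show ?thesis
    unfolding traced_path_def by (rule edge_walk_is_path[OF steps graph s_in_V])
qed

lemma traced_paths_edge_disjoint:
  assumes f: "N.is_flow f" and one_way: "\<And>e u w. \<not> (f (Inl (e, u, w)) = 1 \<and> f (Inl (e, w, u)) = 1)"
    and W: "set W \<subseteq> {a. f a = 1}" and W': "set W' \<subseteq> {a. f a = 1}"
    and disj: "set W \<inter> set W' = {}"
  shows "set (snd (traced_path W)) \<inter> set (snd (traced_path W')) = {}"
proof (rule ccontr)
  assume "set (snd (traced_path W)) \<inter> set (snd (traced_path W')) \<noteq> {}"
  then obtain e u w u' w' where
    a: "Inl (e, u, w) \<in> set W" and a': "Inl (e, u', w') \<in> set W'"
    unfolding traced_path_def by (force dest: edge_steps_set)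
  have "Inl (e, u, w) \<in> Arcs" "Inl (e, u', w') \<in> Arcs"
    using a a' W W' N.flow_support[OF f] by force+
  then have "ends e = {u, w}" "ends e = {u', w'}" by (simp_all add: aux_arcs_Inl)
  then have "(u' = u \<and> w' = w) \<or> (u' = w \<and> w' = u)" by (metis doubleton_eq_iff)
  then show False using a a' W W' disj one_way[of e u w] by auto
qed

lemma traced_path_uses_split_arc:
  assumes w: "walk aux_tail (aux_head s t) (s, True) W (t, True)"
    and v: "v \<in> V - {s, t}" "v \<in> set (fst (traced_path W))"
  shows "set W \<inter> Inr ` ({v} \<times> UNIV) \<noteq> {}"
proof -
  obtain e u where "(e, u, v) \<in> set (edge_steps W)" using v unfolding traced_path_def by force
  then have "Inl (e, u, v) \<in> set W" by (rule edge_steps_set)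
  moreover have "aux_head s t (Inl (e, u, v)) = (v, False)" using v by (simp add: entry_def)
  ultimately have "(v, False) \<in> aux_head s t ` set W" by (metis image_eqI)
  then obtain a where "a \<in> set W" "aux_tail a = (v, False)" using walk_leaves[OF w] by auto
  then show ?thesis by (cases a rule: aux_tail.cases) auto
qed

lemma paths_from_cuts:
  assumes cut: "\<And>S. (s, True) \<in> S \<Longrightarrow> (t, True) \<notin> S \<Longrightarrow> 2 * l \<le> card (N.cut_arcs S)"
  shows "\<exists>P. edge_disjoint_paths V E ends s t (2 * l) P \<and>
              (\<forall>v \<in> V - {s, t}. card {i. i < 2 * l \<and> v \<in> set (fst (P i))} \<le> 2)"
proof -
  let ?big = "\<lambda>g. N.is_flow g \<and> int (2 * l) \<le> N.flow_value g"
  obtain f0 where "?big f0" using N.max_flow_min_cut[of "2 * l"] cut by blast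
  then obtain f where f: "N.is_flow f" "int (2 * l) \<le> N.flow_value f"
    and fmin: "\<And>g. ?big g \<Longrightarrow> card {a. f a = 1} \<le> card {a. g a = 1}"
    using ex_has_least_nat[of ?big f0 "\<lambda>g. card {a. g a = 1}"] by blast
  have one_way: "\<not> (f (Inl (e, u, w)) = 1 \<and> f (Inl (e, w, u)) = 1)" for e u w
    using min_support_one_orientation[OF f(1)] fmin f(2) by fastforce
  define m where "m = nat (N.flow_value f)"
  have "N.flow_value f = int m" and lm: "2 * l \<le> m" using f(2) unfolding m_def by auto
  then obtain W where
    W: "\<forall>i<m. walk aux_tail (aux_head s t) (s, True) (W i) (t, True) \<and>
        distinct ((s, True) # map (aux_head s t) (W i)) \<and> set (W i) \<subseteq> {a. f a = 1}"
    and W_disj: "\<forall>i<m. \<forall>j<m. i \<noteq> j \<longrightarrow> set (W i) \<inter> set (W j) = {}"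
    using N.decompose[OF f(1)] by blast
  have WA: "set (W i) \<subseteq> Arcs" if "i < m" for i
    using W that N.flow_support[OF f(1)] by force
  define P where "P i = traced_path (W i)" for i
  have "edge_disjoint_paths V E ends s t (2 * l) P"
    unfolding edge_disjoint_paths_def P_def
    using traced_path_is_path W WA traced_paths_edge_disjoint[OF f(1) one_way] W_disj lm by simp
  moreover have "card {i. i < 2 * l \<and> v \<in> set (fst (P i))} \<le> 2" if v: "v \<in> V - {s, t}" for v
  proof -
    have "card {i. i < 2 * l \<and> v \<in> set (fst (P i))} \<le> card (Inr ` ({v} \<times> UNIV) :: ('e, 'v) aux_arc set)"
      by (rule disjoint_family_meeting_le[where A = "\<lambda>i. set (W i)"])
        (use W W_disj lm traced_path_uses_split_arc[OF _ v] in \<open>auto simp: P_def\<close>)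
    also have "\<dots> \<le> 2" by (simp add: card_image inj_on_def)
    finally show ?thesis .
  qed
  ultimately show ?thesis by blast
qed

end

lemma paths_survive_deletion:
  assumes g: "graph V E ends"
    and P: "edge_disjoint_paths V E ends s t (2 * l) P"
    and use: "\<forall>v \<in> V - {s, t}. card {i. i < 2 * l \<and> v \<in> set (fst (P i))} \<le> 2"
    and C: "C \<subseteq> V - {s, t}"
  shows "enat (2 * (l - card C)) \<le> lambda (del_verts_V V C) (del_verts_E E ends C) ends s t"
proof -
  have "finite C" using C g unfolding graph_def by (meson finite_Diff finite_subset)
  define I where "I = {i. i < 2 * l \<and> set (fst (P i)) \<inter> C = {}}"
  define J where "J = {i. i < 2 * l \<and> set (fst (P i)) \<inter> C \<noteq> {}}"
  have "{..<2 * l} = I \<union> J" unfolding I_def J_def by auto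
  then have "2 * l = card (I \<union> J)" by (metis card_lessThan)
  then have "2 * l \<le> card I + card J" using card_Un_le[of I J] by linarith
  moreover have "card J \<le> 2 * card C" unfolding J_def by (rule paths_meeting_le[OF \<open>finite C\<close> C use])
  ultimately have "2 * (l - card C) \<le> card I" by linarith
  moreover have "enat (card I) \<le> lambda (del_verts_V V C) (del_verts_E E ends C) ends s t"
  proof (rule lambda_ge_family[where P = P])
    fix i assume "i \<in> I"
    then show "is_path (del_verts_V V C) (del_verts_E E ends C) ends s t (P i)"
      using P unfolding I_def edge_disjoint_paths_def by (intro path_avoiding_deleted) auto
  next
    fix i j assume "i \<in> I" "j \<in> I" "i \<noteq> j"
    then show "set (snd (P i)) \<inter> set (snd (P j)) = {}"
      using P unfolding I_def edge_disjoint_paths_def by blast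
  qed (simp add: I_def)
  ultimately show ?thesis using order_trans[of "enat (2 * (l - card C))" "enat (card I)"] by simp
qed

theorem corollary3:
  fixes V :: "'v set" and E :: "'e set" and ends :: "'e \<Rightarrow> 'v set"
    and s t :: 'v and l :: nat
  assumes "graph V E ends" and "s \<in> V" and "t \<in> V" and "0 < l"
  shows "(\<forall>C. C \<subseteq> V - {s, t} \<and> card C < l \<longrightarrow>
             lambda (del_verts_V V C) (del_verts_E E ends C) ends s t \<ge> enat (2 * (l - card C)))
         \<longleftrightarrow>
         (\<exists>P. edge_disjoint_paths V E ends s t (2 * l) P \<and>
              (\<forall>v \<in> V - {s, t}. card {i. i < 2 * l \<and> v \<in> set (fst (P i))} \<le> 2))"
proof
  assume L: "\<forall>C. C \<subseteq> V - {s, t} \<and> card C < l \<longrightarrow>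
             lambda (del_verts_V V C) (del_verts_E E ends C) ends s t \<ge> enat (2 * (l - card C))"
  show "\<exists>P. edge_disjoint_paths V E ends s t (2 * l) P \<and>
              (\<forall>v \<in> V - {s, t}. card {i. i < 2 * l \<and> v \<in> set (fst (P i))} \<le> 2)"
  proof (cases "s = t")
    case True
    \<comment> \<open>Degenerate case: the one-node path [s] can be repeated.\<close>
    then have "edge_disjoint_paths V E ends s t (2 * l) (\<lambda>_. ([s], []))"
      unfolding edge_disjoint_paths_def is_path_def using assms(2) by simp
    then show ?thesis by (intro exI[of _ "\<lambda>_. ([s], [])"]) simp
  next
    case False
    interpret split_network V E ends s t using assms False by unfold_locales
    show ?thesis using paths_from_cuts cut_condition[OF L] by blast
  qed
next
  assume "\<exists>P. edge_disjoint_paths V E ends s t (2 * l) P \<and>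
              (\<forall>v \<in> V - {s, t}. card {i. i < 2 * l \<and> v \<in> set (fst (P i))} \<le> 2)"
  then show "\<forall>C. C \<subseteq> V - {s, t} \<and> card C < l \<longrightarrow>
             lambda (del_verts_V V C) (del_verts_E E ends C) ends s t \<ge> enat (2 * (l - card C))"
    using paths_survive_deletion[OF assms(1)] by blast
qed

end
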